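(* Let $X$ be a topological space and let $g,f:X\to\mathbb{R}$ be functions with $g\le f$ (i.e. $g(x)\le f(x)$ for all $x\in X$). Suppose there exist a strong binary relation $\rho$ on the power set $\mathcal{P}(X)$, and, for each rational number $t$, lower indefinite cut sets $A(f,t)$ and $A(g,t)$ in the domain of $f$ and $g$ respectively at the level $t$, such that whenever $t_1<t_2$ are rationals we have $A(f,t_1)\,\rho\,A(g,t_2)$. (a) If every $\Lambda$-set in $X$ is open, then there exists a contra-continuous function $h:X\to\mathbb{R}$ with $g\le h\le f$. (b) If every $\Lambda$-set in $X$ is a $G_\delta$-set, then there exists a Baire-one function $h:X\to\mathbb{R}$ with $g\le h\le f$.
   Context: A $\Lambda$-set in a topological space $X$ is a set that is an intersection of open sets. For $A\subseteq X$, define $A^{\Lambda}=\bigcap\{O: O\supseteq A,\ O \text{ open}\}$ and $A^{V}=\bigcup\{F: F\subseteq A,\ F \text{ closed}\}$. For a binary relation $\rho$ on a set $S$, define $\bar\rho$ by: $x\,\bar\rho\,y$ iff for all $u,v\in S$, ($y\,\rho\,v$ implies $x\,\rho\,v$) and ($u\,\rho\,x$ implies $u\,\rho\,y$). A binary relation $\rho$ on $\mathcal{P}(X)$ is a strong binary relation if: (1) whenever $A_i\,\rho\,B_j$ for all $i\in\{1,\dots,m\}$ and $j\in\{1,\dots,n\}$, there is $C\in\mathcal{P}(X)$ with $A_i\,\rho\,C$ and $C\,\rho\,B_j$ for all such $i,j$; (2) $A\subseteq B$ implies $A\,\bar\rho\,B$; (3) $A\,\rho\,B$ implies $A^{\Lambda}\subseteq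 B$ and $A\subseteq B^{V}$. For $f:X\to\mathbb{R}$ and $l\in\mathbb{R}$, a set $A(f,l)$ with $\{x: f(x)<l\}\subseteq A(f,l)\subseteq\{x: f(x)\le l\}$ is a lower indefinite cut set in the domain of $f$ at level $l$. A function $h:X\to\mathbb{R}$ is contra-continuous (resp. Baire-one) if the preimage of every open subset of $\mathbb{R}$ is closed (resp. an $F_\sigma$-set) in $X$. *)

theory Defs
  imports "HOL-Analysis.Analysis"
begin

text \<open>A Lambda-set in X: an intersection of (an arbitrary family of) open sets of X.
  The empty family gives X itself.\<close>
definition lambda_set_in :: "'a topology \<Rightarrow> 'a set \<Rightarrow> bool" where
  "lambda_set_in T S \<longleftrightarrow> (\<exists>\<U>. (\<forall>U\<in>\<U>. openin T U) \<and> S = topspace T \<inter> \<Inter>\<U>)"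

definition lambda_hull :: "'a topology \<Rightarrow> 'a set \<Rightarrow> 'a set" where
  "lambda_hull T A = topspace T \<inter> \<Inter>{U. openin T U \<and> A \<subseteq> U}"

definition vee_kernel :: "'a topology \<Rightarrow> 'a set \<Rightarrow> 'a set" where
  "vee_kernel T A = \<Union>{F. closedin T F \<and> F \<subseteq> A}"

definition rel_bar :: "'a topology \<Rightarrow> ('a set \<Rightarrow> 'a set \<Rightarrow> bool) \<Rightarrow> 'a set \<Rightarrow> 'a set \<Rightarrow> bool" where
  "rel_bar T \<rho> x y \<longleftrightarrow>
     (\<forall>u v. u \<subseteq> topspace T \<and> v \<subseteq> topspace T \<longrightarrow>
        (\<rho> y v \<longrightarrow> \<rho> x v) \<and> (\<rho> u x \<longrightarrow> \<rho> u y))"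

text \<open>Strong binary relation on P(X). The finite families A_1..A_m, B_1..B_n
  (m, n >= 1) are represented by finite nonempty sets of subsets of X.\<close>
definition strong_binary_relation :: "'a topology \<Rightarrow> ('a set \<Rightarrow> 'a set \<Rightarrow> bool) \<Rightarrow> bool" where
  "strong_binary_relation T \<rho> \<longleftrightarrow>
     (\<forall>\<A> \<B>. finite \<A> \<and> finite \<B> \<and> \<A> \<noteq> {} \<and> \<B> \<noteq> {} \<and>
        \<A> \<subseteq> Pow (topspace T) \<and> \<B> \<subseteq> Pow (topspace T) \<and>
        (\<forall>A\<in>\<A>. \<forall>B\<in>\<B>. \<rho> A B) \<longrightarrow>
        (\<exists>C. C \<subseteq> topspace T \<and> (\<forall>A\<in>\<A>. \<rho> A C) \<and> (\<forall>B\<in>\<B>. \<rho> C B)))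
   \<and> (\<forall>A B. A \<subseteq> B \<and> B \<subseteq> topspace T \<longrightarrow> rel_bar T \<rho> A B)
   \<and> (\<forall>A B. A \<subseteq> topspace T \<and> B \<subseteq> topspace T \<and> \<rho> A B \<longrightarrow>
        lambda_hull T A \<subseteq> B \<and> A \<subseteq> vee_kernel T B)"

definition lower_cut_set :: "'a topology \<Rightarrow> ('a \<Rightarrow> real) \<Rightarrow> real \<Rightarrow> 'a set \<Rightarrow> bool" where
  "lower_cut_set T f l A \<longleftrightarrow>
     {x \<in> topspace T. f x < l} \<subseteq> A \<and> A \<subseteq> {x \<in> topspace T. f x \<le> l}"

definition contra_continuous_on :: "'a topology \<Rightarrow> ('a \<Rightarrow> real) \<Rightarrow> bool" where
  "contra_continuous_on T h \<longleftrightarrow>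
     (\<forall>U. open U \<longrightarrow> closedin T {x \<in> topspace T. h x \<in> U})"

definition baire_one_on :: "'a topology \<Rightarrow> ('a \<Rightarrow> real) \<Rightarrow> bool" where
  "baire_one_on T h \<longleftrightarrow>
     (\<forall>U. open U \<longrightarrow> fsigma_in T {x \<in> topspace T. h x \<in> U})"

end

theory Submission
  imports Defs
begin

text \<open>Let \<open>\<sim>\<close> be the equivalence relation generated by \<open>x \<in> cl {y}\<close>. If \<open>A \<rho> B\<close> and
  \<open>x \<in> A\<close>, then every point of the closure of \<open>x\<close> lies in \<open>B\<close> because \<open>A \<subseteq> B\<^sup>V\<close>, and every \<open>y\<close>
  with \<open>x \<in> cl {y}\<close> lies in \<open>B\<close> because \<open>A\<^sup>\<Lambda> \<subseteq> B\<close>; interpolating a chain of sets between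
  \<open>A\<close> and \<open>B\<close> shows that all of the \<open>\<sim>\<close>-class of \<open>x\<close> lies in \<open>B\<close>. Applied to the cut sets
  this gives \<open>g y \<le> f x\<close> whenever \<open>x \<sim> y\<close>, so the infimum of \<open>f\<close> over the class of \<open>x\<close> is
  a function \<open>h\<close> between \<open>g\<close> and \<open>f\<close> that is constant on classes. A \<open>\<sim>\<close>-saturated set is a
  \<open>\<Lambda>\<close>-set, being the intersection of the complements of the closures of the points outside
  it; hence the complement of every preimage under \<open>h\<close> is a \<open>\<Lambda>\<close>-set, which is open in case
  (a) and a \<open>G\<^sub>\<delta>\<close>-set in case (b).\<close>

definition specialization_equiv :: "'a topology \<Rightarrow> 'a \<Rightarrow> 'a \<Rightarrow> bool" where
  "specialization_equiv T = (symclp (\<lambda>x y. x \<in> T closure_of {y}))\<^sup>*\<^sup>*"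

lemma equivp_specialization_equiv: "equivp (specialization_equiv T)"
  unfolding specialization_equiv_def by simp

lemma specialization_equiv_if_in_closure_of:
  "x \<in> T closure_of {y} \<Longrightarrow> specialization_equiv T x y"
  unfolding specialization_equiv_def by (intro r_into_rtranclp symclpI)

lemma in_closure_of_singleton_imp_topspace:
  assumes "x \<in> T closure_of {y}"
  shows "y \<in> topspace T"
proof (rule ccontr)
  assume "y \<notin> topspace T"
  then have "T closure_of {y} = {}"
    using closure_of_restrict[of T "{y}"] by simp
  then show False
    using assms by simp
qed

lemma in_lambda_hull_if_in_closure_of:
  assumes "x \<in> A" "x \<in> T closure_of {y}"
  shows "y \<in> lambda_hull T A"
  using assms in_closure_of_singleton_imp_topspace[OF assms(2)]
  by (auto simp: lambda_hull_def in_closure_of)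

lemma closure_of_subset_if_in_vee_kernel:
  assumes "x \<in> vee_kernel T B"
  shows "T closure_of {x} \<subseteq> B"
proof -
  obtain F where "closedin T F" "F \<subseteq> B" "x \<in> F"
    using assms unfolding vee_kernel_def by blast
  then show ?thesis
    using closure_of_minimal[of "{x}" F T] by blast
qed

lemma strong_binary_relation_interpolate:
  assumes "strong_binary_relation T \<rho>" "A \<subseteq> topspace T" "B \<subseteq> topspace T" "\<rho> A B"
  obtains C where "C \<subseteq> topspace T" "\<rho> A C" "\<rho> C B"
proof -
  have "\<exists>C. C \<subseteq> topspace T \<and> (\<forall>A'\<in>{A}. \<rho> A' C) \<and> (\<forall>B'\<in>{B}. \<rho> C B')"
    using assms(1)[unfolded strong_binary_relation_def, THEN conjunct1, rule_format, of "{A}" "{B}"]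
      assms(2-4) by simp
  then show ?thesis
    using that by auto
qed

lemma strong_binary_relation_lambda_hull_vee_kernel:
  assumes "strong_binary_relation T \<rho>" "A \<subseteq> topspace T" "B \<subseteq> topspace T" "\<rho> A B"
  shows "lambda_hull T A \<subseteq> B" "A \<subseteq> vee_kernel T B"
  using assms(1)[unfolded strong_binary_relation_def, THEN conjunct2, THEN conjunct2, rule_format, of A B]
    assms(2-4) by simp_all

lemma strong_binary_relation_mem_symclp:
  assumes strong: "strong_binary_relation T \<rho>"
    and AB: "A \<subseteq> topspace T" "B \<subseteq> topspace T" "\<rho> A B"
    and x: "x \<in> A" and xy: "symclp (\<lambda>x y. x \<in> T closure_of {y}) x y"
  shows "y \<in> B"
  using xy
proof (cases rule: symclpE)
  case base
  then have "y \<in> lambda_hull T A"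
    using x by (rule in_lambda_hull_if_in_closure_of[rotated])
  then show ?thesis
    using strong_binary_relation_lambda_hull_vee_kernel(1)[OF strong AB] by blast
next
  case sym
  have "x \<in> vee_kernel T B"
    using strong_binary_relation_lambda_hull_vee_kernel(2)[OF strong AB] x by (rule subsetD)
  then have "T closure_of {x} \<subseteq> B"
    by (rule closure_of_subset_if_in_vee_kernel)
  then show ?thesis
    using sym by blast
qed

lemma strong_binary_relation_mem_specialization_equiv:
  assumes strong: "strong_binary_relation T \<rho>"
    and A: "A \<subseteq> topspace T" "x \<in> A" and B: "B \<subseteq> topspace T" "\<rho> A B"
    and xy: "specialization_equiv T x y"
  shows "y \<in> B"
  using xy B unfolding specialization_equiv_def
proof (induction arbitrary: B rule: rtranclp_induct)
  case base
  have "x \<in> vee_kernel T B"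
    using strong_binary_relation_lambda_hull_vee_kernel(2)[OF strong A(1) base] A(2) by (rule subsetD)
  then show ?case
    unfolding vee_kernel_def by blast
next
  case (step y z)
  obtain C where C: "C \<subseteq> topspace T" "\<rho> A C" "\<rho> C B"
    using strong_binary_relation_interpolate[OF strong A(1) step.prems] .
  have "y \<in> C"
    using step.IH C(1,2) .
  then show ?case
    by (rule strong_binary_relation_mem_symclp[OF strong C(1) step.prems(1) C(3) _ step.hyps(2)])
qed

lemma cut_sets_le_specialization_equiv:
  fixes f g :: "'a \<Rightarrow> real" and Af Ag :: "rat \<Rightarrow> 'a set"
  assumes strong: "strong_binary_relation T \<rho>"
    and cut_f: "\<And>t. lower_cut_set T f (of_rat t) (Af t)"
    and cut_g: "\<And>t. lower_cut_set T g (of_rat t) (Ag t)"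
    and rel: "\<And>t1 t2. t1 < t2 \<Longrightarrow> \<rho> (Af t1) (Ag t2)"
    and x: "x \<in> topspace T" and xy: "specialization_equiv T x y"
  shows "g y \<le> f x"
proof (rule ccontr)
  assume "\<not> g y \<le> f x"
  then have "f x < g y"
    by simp
  then obtain r1 where r1: "r1 \<in> \<rat>" "f x < r1" "r1 < g y"
    using Rats_dense_in_real by metis
  then obtain r2 where r2: "r2 \<in> \<rat>" "r1 < r2" "r2 < g y"
    using Rats_dense_in_real by metis
  obtain t1 where t1: "r1 = of_rat t1"
    using r1(1) by (rule Rats_cases)
  obtain t2 where t2: "r2 = of_rat t2"
    using r2(1) by (rule Rats_cases)
  have x_in: "x \<in> Af t1" and Af: "Af t1 \<subseteq> topspace T"
    using cut_f[of t1] x r1(2) t1 unfolding lower_cut_set_def by auto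
  have Ag: "Ag t2 \<subseteq> topspace T"
    using cut_g[of t2] unfolding lower_cut_set_def by auto
  have "\<rho> (Af t1) (Ag t2)"
    using r2(2) t1 t2 by (intro rel) (simp add: of_rat_less)
  then have "y \<in> Ag t2"
    using strong_binary_relation_mem_specialization_equiv[OF strong Af x_in Ag _ xy] by simp
  then show False
    using cut_g[of t2] r2(3) t2 unfolding lower_cut_set_def by auto
qed

lemma exists_class_invariant_between:
  fixes f g :: "'a \<Rightarrow> real"
  assumes R: "equivp R" and le: "\<And>x y. x \<in> S \<Longrightarrow> R x y \<Longrightarrow> g y \<le> f x"
  obtains h where "\<And>x y. R x y \<Longrightarrow> h x = h y" "\<And>x. x \<in> S \<Longrightarrow> g x \<le> h x \<and> h x \<le> f x"
proof -
  define h where "h x = Inf (f ` {y \<in> S. R x y})" for x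
  have "h x = h y" if "R x y" for x y
    using R that unfolding h_def by (metis equivp_def)
  moreover have "g x \<le> h x \<and> h x \<le> f x" if "x \<in> S" for x
  proof -
    have lower: "g x \<le> f y" if "y \<in> S" "R x y" for y
      using le that equivp_symp[OF R] by blast
    have "x \<in> {y \<in> S. R x y}"
      using \<open>x \<in> S\<close> equivp_reflp[OF R] by blast
    then show ?thesis
      unfolding h_def using lower
      by (auto intro!: cInf_greatest cInf_lower bdd_belowI2[where m = "g x"])
  qed
  ultimately show ?thesis
    using that by blast
qed

lemma lambda_set_in_if_saturated:
  assumes W: "W \<subseteq> topspace T"
    and sat: "\<And>x y. x \<in> W \<Longrightarrow> x \<in> T closure_of {y} \<Longrightarrow> y \<in> W"
  shows "lambda_set_in T W"
  unfolding lambda_set_in_def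
proof (intro exI conjI)
  let ?\<U> = "(\<lambda>y. topspace T - T closure_of {y}) ` (topspace T - W)"
  show "\<forall>U\<in>?\<U>. openin T U"
    by auto
  have "x \<notin> \<Inter>?\<U>" if "x \<in> topspace T - W" for x
  proof -
    have "x \<in> T closure_of {x}"
      using that closure_of_subset[of "{x}" T] by auto
    then show ?thesis
      using that by blast
  qed
  moreover have "W \<subseteq> \<Inter>?\<U>"
    using W sat by blast
  ultimately show "W = topspace T \<inter> \<Inter>?\<U>"
    using W by blast
qed

lemma lambda_set_in_vimage_compl:
  assumes "\<And>x y. x \<in> T closure_of {y} \<Longrightarrow> h x = h y"
  shows "lambda_set_in T {x \<in> topspace T. h x \<notin> U}"
proof (rule lambda_set_in_if_saturated)
  fix x y
  assume "x \<in> {x \<in> topspace T. h x \<notin> U}" "x \<in> T closure_of {y}"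
  then show "y \<in> {x \<in> topspace T. h x \<notin> U}"
    using assms in_closure_of_singleton_imp_topspace by fastforce
qed auto

lemma vimage_eq_topspace_diff_vimage_compl:
  "{x \<in> topspace T. h x \<in> U} = topspace T - {x \<in> topspace T. h x \<notin> U}"
  by blast

lemma contra_continuous_on_if_closure_invariant:
  assumes "\<forall>S. lambda_set_in T S \<longrightarrow> openin T S"
    and "\<And>x y. x \<in> T closure_of {y} \<Longrightarrow> h x = h y"
  shows "contra_continuous_on T h"
  unfolding contra_continuous_on_def
proof (intro allI impI)
  fix U :: "real set"
  have "lambda_set_in T {x \<in> topspace T. h x \<notin> U}"
    using assms(2) by (rule lambda_set_in_vimage_compl)
  then have "openin T {x \<in> topspace T. h x \<notin> U}"
    using assms(1) by simp
  then show "closedin T {x \<in> topspace T. h x \<in> U}"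
    by (subst vimage_eq_topspace_diff_vimage_compl) (rule closedin_diff[OF closedin_topspace])
qed

lemma baire_one_on_if_closure_invariant:
  assumes "\<forall>S. lambda_set_in T S \<longrightarrow> gdelta_in T S"
    and "\<And>x y. x \<in> T closure_of {y} \<Longrightarrow> h x = h y"
  shows "baire_one_on T h"
  unfolding baire_one_on_def
proof (intro allI impI)
  fix U :: "real set"
  have "lambda_set_in T {x \<in> topspace T. h x \<notin> U}"
    using assms(2) by (rule lambda_set_in_vimage_compl)
  then have "gdelta_in T {x \<in> topspace T. h x \<notin> U}"
    using assms(1) by simp
  then show "fsigma_in T {x \<in> topspace T. h x \<in> U}"
    by (subst vimage_eq_topspace_diff_vimage_compl) (rule fsigma_in_diff[OF fsigma_in_topspace])
qed

theorem theorem1: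
  fixes T :: "'a topology" and f g :: "'a \<Rightarrow> real"
    and \<rho> :: "'a set \<Rightarrow> 'a set \<Rightarrow> bool"
    and Af Ag :: "rat \<Rightarrow> 'a set"
  assumes g_le_f: "\<forall>x\<in>topspace T. g x \<le> f x"
    and strong: "strong_binary_relation T \<rho>"
    and cut_f: "\<forall>t. lower_cut_set T f (of_rat t) (Af t)"
    and cut_g: "\<forall>t. lower_cut_set T g (of_rat t) (Ag t)"
    and rel: "\<forall>t1 t2. t1 < t2 \<longrightarrow> \<rho> (Af t1) (Ag t2)"
  shows "((\<forall>S. lambda_set_in T S \<longrightarrow> openin T S) \<longrightarrow>
            (\<exists>h. contra_continuous_on T h \<and> (\<forall>x\<in>topspace T. g x \<le> h x \<and> h x \<le> f x)))
       \<and> ((\<forall>S. lambda_set_in T S \<longrightarrow> gdelta_in T S) \<longrightarrow>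
            (\<exists>h. baire_one_on T h \<and> (\<forall>x\<in>topspace T. g x \<le> h x \<and> h x \<le> f x)))"
proof -
  \<comment> \<open>\<open>g_le_f\<close> is not needed: it is the case \<open>x = y\<close> of \<open>cut_sets_le_specialization_equiv\<close>.\<close>
  obtain h where
      invariant: "\<And>x y. specialization_equiv T x y \<Longrightarrow> h x = h y"
    and between: "\<And>x. x \<in> topspace T \<Longrightarrow> g x \<le> h x \<and> h x \<le> f x"
  proof (rule exists_class_invariant_between[OF equivp_specialization_equiv])
    show "g y \<le> f x" if "x \<in> topspace T" "specialization_equiv T x y" for x y
      using cut_sets_le_specialization_equiv[OF strong cut_f[rule_format] cut_g[rule_format]
          rel[rule_format] that] .
  qed (rule that)
  have closure_invariant: "h x = h y" if "x \<in> T closure_of {y}" for x y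
    using invariant[OF specialization_equiv_if_in_closure_of[OF that]] .
  show ?thesis
  proof (intro conjI impI)
    assume "\<forall>S. lambda_set_in T S \<longrightarrow> openin T S"
    then have "contra_continuous_on T h"
      using closure_invariant by (rule contra_continuous_on_if_closure_invariant)
    then show "\<exists>h. contra_continuous_on T h \<and> (\<forall>x\<in>topspace T. g x \<le> h x \<and> h x \<le> f x)"
      using between by auto
  next
    assume "\<forall>S. lambda_set_in T S \<longrightarrow> gdelta_in T S"
    then have "baire_one_on T h"
      using closure_invariant by (rule baire_one_on_if_closure_invariant)
    then show "\<exists>h. baire_one_on T h \<and> (\<forall>x\<in>topspace T. g x \<le> h x \<and> h x \<le> f x)"
      using between by auto
  qed
qed

end
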